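(* Let $n\ge 2$. The function $\mathbf{H}$ is shift-invariant and homogeneous (of order 1): $\mathbf{H}(x_1+r,\dots,x_n+r)=\mathbf{H}(\mathbf{x})+r$ whenever $r\in[-1,1]$, $(x_1+r,\dots,x_n+r)\in[0,1]^n$ and $\mathbf{H}(\mathbf{x})+r\in[0,1]$; and $\mathbf{H}(\lambda x_1,\dots,\lambda x_n)=\lambda\mathbf{H}(\mathbf{x})$ for all $\lambda\in[0,1]$ and $\mathbf{x}\in[0,1]^n$.
   Context: For $\mathbf{x}\in[0,1]^n$ let $x_{(1)}\ge\dots\ge x_{(n)}$ be its entries in decreasing order, and define the median $Med(\mathbf{x})=\frac12(x_{(k)}+x_{(k+1)})$ if $n=2k$ and $Med(\mathbf{x})=x_{(k+1)}$ if $n=2k+1$. Define $f_i(\mathbf{x})=\frac1n$ if $x_1=\dots=x_n$, and otherwise $f_i(\mathbf{x})=\frac{1}{n-1}\Big(1-\frac{|x_i-Med(\mathbf{x})|}{\sum_{j=1}^n|x_j-Med(\mathbf{x})|}\Big)$. Then $\mathbf{H}(\mathbf{x})=\sum_{i=1}^n f_i(\mathbf{x})\,x_i$. *)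

theory Defs
  imports Complex_Main
begin

text \<open>Vectors in [0,1]^n are represented as real lists of length n;
  entry x_i (1-based in the paper) is xs ! (i-1).\<close>

definition ord_stat :: "real list \<Rightarrow> nat \<Rightarrow> real" where
  "ord_stat xs j = rev (sort xs) ! (j - 1)"

definition Med :: "real list \<Rightarrow> real" where
  "Med xs = (let k = length xs div 2 in
     if even (length xs) then (ord_stat xs k + ord_stat xs (k + 1)) / 2
     else ord_stat xs (k + 1))"

definition f_w :: "real list \<Rightarrow> nat \<Rightarrow> real" where
  "f_w xs i = (if (\<forall>j < length xs. xs ! j = xs ! 0) then 1 / real (length xs)
     else (1 / (real (length xs) - 1)) *
          (1 - \<bar>xs ! i - Med xs\<bar> / (\<Sum>j < length xs. \<bar>xs ! j - Med xs\<bar>)))"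

definition H :: "real list \<Rightarrow> real" where
  "H xs = (\<Sum>i < length xs. f_w xs i * xs ! i)"

end

theory Submission
  imports Defs "HOL-Library.Multiset"
begin

text \<open>The median commutes with every increasing affine map x \<mapsto> a x + b, so the
  deviations |x_i - Med x| are all multiplied by a. For a > 0 the weights f_i, which only
  see ratios of these deviations and whether x is constant, are therefore unchanged, and
  since they sum to 1 we get H(a x + b) = a H(x) + b. For a = 0 the image is the constant
  vector b, whose H-value is again b. Shift invariance and homogeneity are the cases
  a = 1 and b = 0.\<close>

lemma sort_map_mono:
  fixes f :: "'a::linorder \<Rightarrow> 'b::linorder"
  assumes "mono f"
  shows "sort (map f xs) = map f (sort xs)"
proof (rule properties_for_sort)
  show "mset (map f (sort xs)) = mset (map f xs)" by simp
  show "sorted (map f (sort xs))"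
    using assms by (intro sorted_map_mono) (auto simp: mono_on_def monoD)
qed

lemma ord_stat_map_mono:
  fixes f :: "real \<Rightarrow> real"
  assumes "mono f" "1 \<le> j" "j \<le> length xs"
  shows "ord_stat (map f xs) j = f (ord_stat xs j)"
  using assms by (simp add: ord_stat_def sort_map_mono rev_map rev_nth)

lemma Med_map_affine:
  assumes "xs \<noteq> []" "a \<ge> 0"
  shows "Med (map (\<lambda>x. a * x + b) xs) = a * Med xs + b"
proof -
  have mono: "mono (\<lambda>x::real. a * x + b)"
    using assms(2) by (simp add: mono_def mult_left_mono)
  let ?k = "length xs div 2"
  show ?thesis
  proof (cases "even (length xs)")
    case True
    moreover have "length xs \<noteq> 0" using assms(1) by simp
    ultimately have "1 \<le> ?k" "?k + 1 \<le> length xs" by presburger+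
    with True show ?thesis
      by (simp add: Med_def Let_def ord_stat_map_mono[OF mono]) (simp add: field_simps)
  next
    case False
    then have "1 \<le> ?k + 1" "?k + 1 \<le> length xs" by presburger+
    with False show ?thesis
      by (simp add: Med_def Let_def ord_stat_map_mono[OF mono])
  qed
qed

lemma sum_f_w_eq_1:
  assumes "xs \<noteq> []"
  shows "(\<Sum>i < length xs. f_w xs i) = 1"
proof (cases "\<forall>j < length xs. xs ! j = xs ! 0")
  case True
  then show ?thesis unfolding f_w_def if_P[OF True] using assms by simp
next
  case False
  let ?S = "\<Sum>j < length xs. \<bar>xs ! j - Med xs\<bar>"
  from False obtain j where j: "j < length xs" "xs ! j \<noteq> xs ! 0" by auto
  have "?S \<noteq> 0"
  proof
    assume "?S = 0"
    then have "\<forall>i < length xs. xs ! i = Med xs" by (simp add: sum_nonneg_eq_0_iff)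
    with j show False by (metis length_pos_if_in_set nth_mem)
  qed
  have "length xs \<ge> 2" using j by (cases "j = 0") auto
  have "(\<Sum>i < length xs. f_w xs i)
      = (1 / (real (length xs) - 1)) * (real (length xs) - ?S / ?S)"
    unfolding f_w_def if_not_P[OF False]
    by (simp add: sum_distrib_left[symmetric] sum_subtractf sum_divide_distrib[symmetric])
  also have "\<dots> = 1" using \<open>?S \<noteq> 0\<close> \<open>length xs \<ge> 2\<close> by simp
  finally show ?thesis .
qed

lemma f_w_map_affine:
  assumes "xs \<noteq> []" "a > 0" "i < length xs"
  shows "f_w (map (\<lambda>x. a * x + b) xs) i = f_w xs i"
proof -
  let ?ys = "map (\<lambda>x. a * x + b) xs"
  have const_iff: "(\<forall>j<length ?ys. ?ys ! j = ?ys ! 0) \<longleftrightarrow> (\<forall>j<length xs. xs ! j = xs ! 0)"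
    using assms by auto
  have dev: "\<bar>?ys ! j - Med ?ys\<bar> = a * \<bar>xs ! j - Med xs\<bar>" if "j < length xs" for j
    using that assms by (simp add: Med_map_affine abs_mult right_diff_distrib[symmetric])
  then have sum_dev: "(\<Sum>j<length ?ys. \<bar>?ys ! j - Med ?ys\<bar>)
      = a * (\<Sum>j<length xs. \<bar>xs ! j - Med xs\<bar>)"
    by (simp add: sum_distrib_left del: nth_map)
  show ?thesis
  proof (cases "\<forall>j<length xs. xs ! j = xs ! 0")
    case True
    then show ?thesis unfolding f_w_def const_iff by simp
  next
    case False
    show ?thesis
      unfolding f_w_def const_iff sum_dev dev[OF assms(3)] if_not_P[OF False]
      using assms(2) by simp
  qed
qed

lemma H_map_affine:
  assumes "xs \<noteq> []" "a \<ge> 0"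
  shows "H (map (\<lambda>x. a * x + b) xs) = a * H xs + b"
proof (cases "a = 0")
  case True
  have "H (map (\<lambda>x. a * x + b) xs) = (\<Sum>i < length xs. f_w (map (\<lambda>_. b) xs) i) * b"
    using True by (simp add: H_def sum_distrib_right)
  also have "\<dots> = b" using sum_f_w_eq_1[of "map (\<lambda>_. b) xs"] assms(1) by simp
  finally show ?thesis using True by simp
next
  case False
  then have "a > 0" using assms(2) by simp
  then have "H (map (\<lambda>x. a * x + b) xs) = (\<Sum>i < length xs. f_w xs i * (a * xs ! i + b))"
    unfolding H_def using assms(1) by (simp add: f_w_map_affine)
  also have "\<dots> = a * H xs + (\<Sum>i < length xs. f_w xs i) * b"
    by (simp add: H_def algebra_simps sum.distrib sum_distrib_left sum_distrib_right)
  finally show ?thesis using sum_f_w_eq_1[OF assms(1)] by simp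
qed

theorem corollary4:
  fixes n :: nat and xs :: "real list"
  assumes "n \<ge> 2" and "length xs = n" and "set xs \<subseteq> {0..1}"
  shows "(\<forall>r::real. r \<in> {-1..1} \<longrightarrow> set (map (\<lambda>x. x + r) xs) \<subseteq> {0..1}
            \<longrightarrow> H xs + r \<in> {0..1} \<longrightarrow> H (map (\<lambda>x. x + r) xs) = H xs + r)
       \<and> (\<forall>l::real. l \<in> {0..1} \<longrightarrow> H (map (\<lambda>x. l * x) xs) = l * H xs)"
proof -
  have "xs \<noteq> []" using assms(1,2) by auto
  then have "H (map (\<lambda>x. x + r) xs) = H xs + r"
    and "l \<ge> 0 \<Longrightarrow> H (map (\<lambda>x. l * x) xs) = l * H xs" for r l
    using H_map_affine[of xs 1 r] H_map_affine[of xs l 0] by simp_all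
  then show ?thesis by simp
qed

end
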